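(* Let $u_0(x)=x/(1+x)$ and $u_1(x)=1/(1+x)$, and let $\Phi$ be the free semigroup (under composition) generated by $u_0$ and $u_1$. For $x\in\mathbb{R}$ and $\epsilon>0$ let $\mathcal{U}_\epsilon(x)$ denote the interval centred at $x$ of Euclidean diameter $\epsilon$. Then for each $g\in\Phi$ there exists a function $\Delta:(0,1]\to\mathbb{R}_+$ with $\lim_{s\to0}\Delta(s)=0$ such that for every $h\in\Phi$ and every sufficiently small $\epsilon>0$, \[ \Bigl|\operatorname{diam}\bigl(h(\mathcal{U}_\epsilon(g(1)))\bigr)-\epsilon\,|h'(g(1))|\Bigr| < \epsilon\,|(h\circ g)'(1)|\,\Delta(\epsilon). \]
   Context: $u_0,u_1$ are the inverse branches of the Farey map $T(x)=x/(1-x)$ on $[0,1/2]$, $T(x)=(1-x)/x$ on $(1/2,1]$; they are regarded as maps on a neighbourhood of $[0,1]$ in $(-1,\infty)$. $\operatorname{diam}$ denotes Euclidean diameter. *)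

theory Defs
  imports "HOL-Analysis.Analysis"
begin

definition u0 :: "real \<Rightarrow> real" where "u0 x = x / (1 + x)"
definition u1 :: "real \<Rightarrow> real" where "u1 x = 1 / (1 + x)"

text \<open>A word over {u0,u1} (False = u0, True = u1) denotes the composition
  of the generators, leftmost letter applied last.\<close>
fun word_map :: "bool list \<Rightarrow> real \<Rightarrow> real" where
  "word_map [] = id"
| "word_map (b # w) = (if b then u1 else u0) \<circ> word_map w"

definition Phi :: "(real \<Rightarrow> real) set" where
  "Phi = {word_map w | w. w \<noteq> []}"

definition U :: "real \<Rightarrow> real \<Rightarrow> real set" where
  "U eps x = {x - eps/2 .. x + eps/2}"

end

theory Submission
  imports Defs
begin

text \<open>Every element of Phi is a Moebius map x \<mapsto> (px+q)/(rx+s) with nonnegative coefficients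
  and determinant ps - qr = \<plusminus>1. On an interval around x > 0 such a map is monotone, so the image of
  U \<epsilon> x has diameter exactly \<epsilon>/((r(x-\<epsilon>/2)+s)(r(x+\<epsilon>/2)+s)), which differs from
  \<epsilon>|h'(x)| = \<epsilon>/(rx+s)^2 by O(\<epsilon>^3). Since |(h \<circ> g)'(1)| > 0, one may therefore take
  \<Delta>(\<epsilon>) = \<epsilon>.\<close>

lemma word_map_append: "word_map (v @ w) = word_map v \<circ> word_map w"
  by (induction v) auto

lemma word_map_pos: "x > 0 \<Longrightarrow> word_map w x > 0"
  by (induction w) (auto simp: u0_def u1_def)

definition mobius :: "real \<Rightarrow> real \<Rightarrow> real \<Rightarrow> real \<Rightarrow> real \<Rightarrow> real" where
  "mobius p q r s x = (p * x + q) / (r * x + s)"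

lemma mobius_diff:
  assumes "r * y + s \<noteq> 0" "r * z + s \<noteq> 0"
  shows "mobius p q r s y - mobius p q r s z
           = (p * s - q * r) * (y - z) / ((r * y + s) * (r * z + s))"
  using assms by (simp add: mobius_def field_simps)

lemma has_field_derivative_mobius:
  assumes "r * x + s \<noteq> 0"
  shows "(mobius p q r s has_field_derivative (p * s - q * r) / (r * x + s)^2) (at x)"
proof -
  have "(mobius p q r s has_field_derivative (p * (r * x + s) - (p * x + q) * r) / (r * x + s)^2) (at x)"
    unfolding mobius_def[abs_def] using assms
    by (auto intro!: derivative_eq_intros simp: power2_eq_square)
  thus ?thesis by (simp add: algebra_simps)
qed

lemma affine_pos:
  fixes r s x :: real
  shows "r \<ge> 0 \<Longrightarrow> s \<ge> 0 \<Longrightarrow> r + s > 0 \<Longrightarrow> x > 0 \<Longrightarrow> r * x + s > 0"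
proof (cases "r = 0")
  case False
  then show "r \<ge> 0 \<Longrightarrow> s \<ge> 0 \<Longrightarrow> x > 0 \<Longrightarrow> r * x + s > 0"
    by (simp add: add_pos_nonneg)
qed simp

lemma one_plus_mobius:
  assumes "r * x + s \<noteq> 0"
  shows "1 + mobius p q r s x = mobius (p + r) (q + s) r s x"
  using assms by (simp add: mobius_def field_simps)

lemma u0_mobius:
  assumes "r * x + s \<noteq> 0" "(p + r) * x + (q + s) \<noteq> 0"
  shows "u0 (mobius p q r s x) = mobius p q (p + r) (q + s) x"
  using assms by (simp add: u0_def one_plus_mobius) (simp add: mobius_def)

lemma u1_mobius:
  assumes "r * x + s \<noteq> 0" "(p + r) * x + (q + s) \<noteq> 0"
  shows "u1 (mobius p q r s x) = mobius r s (p + r) (q + s) x"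
  using assms by (simp add: u1_def one_plus_mobius) (simp add: mobius_def)

lemma word_map_eq_mobius:
  "\<exists>p q r s. p \<ge> 0 \<and> q \<ge> 0 \<and> r \<ge> 0 \<and> s \<ge> 0 \<and> r + s > 0 \<and> \<bar>p * s - q * r\<bar> = 1 \<and>
     (\<forall>x>0. word_map w x = mobius p q r s x)"
proof (induction w)
  case Nil
  show ?case
    by (intro exI[of _ 1] exI[of _ 0] exI[of _ 0] exI[of _ 1]) (simp add: mobius_def)
next
  case (Cons b w)
  then obtain p q r s where coeffs: "p \<ge> 0" "q \<ge> 0" "r \<ge> 0" "s \<ge> 0" "r + s > 0"
    and det: "\<bar>p * s - q * r\<bar> = 1" and w: "\<forall>x>0. word_map w x = mobius p q r s x"
    by blast
  have den: "r * x + s > 0" "(p + r) * x + (q + s) > 0" if "x > 0" for x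
  proof -
    show "r * x + s > 0"
      using coeffs that by (simp add: affine_pos)
    moreover have "p * x + q \<ge> 0" using coeffs that by simp
    ultimately show "(p + r) * x + (q + s) > 0"
      by (simp add: algebra_simps)
  qed
  show ?case
  proof (cases b)
    case True
    have "\<forall>x>0. word_map (b # w) x = mobius r s (p + r) (q + s) x"
      using True w den by (auto intro!: u1_mobius simp: order_less_imp_not_eq2)
    moreover have "\<bar>r * (q + s) - s * (p + r)\<bar> = 1"
      using det by (simp add: algebra_simps abs_minus_commute)
    ultimately show ?thesis
      using coeffs by (intro exI[of _ r] exI[of _ s] exI[of _ "p + r"] exI[of _ "q + s"]) simp
  next
    case False
    have "\<forall>x>0. word_map (b # w) x = mobius p q (p + r) (q + s) x"
      using False w den by (auto intro!: u0_mobius simp: order_less_imp_not_eq2)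
    moreover have "\<bar>p * (q + s) - q * (p + r)\<bar> = 1"
      using det by (simp add: algebra_simps)
    ultimately show ?thesis
      using coeffs by (intro exI[of _ p] exI[of _ q] exI[of _ "p + r"] exI[of _ "q + s"]) simp
  qed
qed

lemma deriv_word_map:
  assumes w: "\<forall>y>0. word_map w y = mobius p q r s y" and "x > 0" "r * x + s \<noteq> 0"
  shows "deriv (word_map w) x = (p * s - q * r) / (r * x + s)^2"
proof -
  have "eventually (\<lambda>y. word_map w y = mobius p q r s y) (nhds x)"
    using eventually_nhds_in_open[of "{0<..}" x] \<open>x > 0\<close> w
    by (auto elim!: eventually_mono)
  hence "deriv (word_map w) x = deriv (mobius p q r s) x"
    by (rule deriv_cong_ev) simp
  also have "\<dots> = (p * s - q * r) / (r * x + s)^2"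
    by (rule DERIV_imp_deriv has_field_derivative_mobius assms)+
  finally show ?thesis .
qed

lemma diameter_between_min_max:
  fixes S :: "real set"
  assumes "S \<subseteq> {lo..hi}" "lo \<in> S" "hi \<in> S"
  shows "diameter S = hi - lo"
proof (rule antisym)
  show "diameter S \<le> hi - lo"
    using diameter_subset[OF assms(1)] assms by auto
  have "dist hi lo \<le> diameter S"
    using assms bounded_subset[OF bounded_closed_interval assms(1)]
    by (intro diameter_bounded_bound) auto
  thus "hi - lo \<le> diameter S"
    using assms by (auto simp: dist_real_def)
qed

lemma diameter_image_monotone_interval:
  fixes f :: "real \<Rightarrow> real"
  assumes "a \<le> b" and "mono_on {a..b} f \<or> antimono_on {a..b} f"
  shows "diameter (f ` {a..b}) = \<bar>f b - f a\<bar>"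
  using assms(2)
proof
  assume mono: "mono_on {a..b} f"
  have "f ` {a..b} \<subseteq> {f a..f b}"
    using mono_onD[OF mono, of a] mono_onD[OF mono, of _ b] by auto
  moreover have "f a \<le> f b" using mono_onD[OF mono, of a b] \<open>a \<le> b\<close> by simp
  ultimately show ?thesis using \<open>a \<le> b\<close> by (simp add: diameter_between_min_max)
next
  assume anti: "antimono_on {a..b} f"
  have "f ` {a..b} \<subseteq> {f b..f a}"
    using monotone_onD[OF anti, of a] monotone_onD[OF anti, of _ b] by auto
  moreover have "f b \<le> f a" using monotone_onD[OF anti, of a b] \<open>a \<le> b\<close> by simp
  ultimately show ?thesis using \<open>a \<le> b\<close> by (simp add: diameter_between_min_max)
qed

lemma mobius_monotone_on:
  assumes "\<And>y. y \<in> S \<Longrightarrow> r * y + s > 0"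
  shows "mono_on S (mobius p q r s) \<or> antimono_on S (mobius p q r s)"
proof -
  let ?f = "mobius p q r s" and ?D = "p * s - q * r"
  have diff: "?f z - ?f y = ?D * ((z - y) / ((r * z + s) * (r * y + s)))"
    and quot: "(z - y) / ((r * z + s) * (r * y + s)) \<ge> 0"
    if "y \<in> S" "z \<in> S" "y \<le> z" for y z
    using mobius_diff[of r z s y p q] assms[OF that(1)] assms[OF that(2)] that(3) by auto
  show ?thesis
  proof (cases "?D \<ge> 0")
    case True
    have "mono_on S ?f"
    proof (rule mono_onI)
      fix y z assume yz: "y \<in> S" "z \<in> S" "y \<le> z"
      show "?f y \<le> ?f z"
        using mult_nonneg_nonneg[OF True quot[OF yz]] diff[OF yz] by linarith
    qed
    thus ?thesis ..
  next
    case False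
    have "antimono_on S ?f"
    proof (rule monotone_onI)
      fix y z assume yz: "y \<in> S" "z \<in> S" "y \<le> z"
      have "?D \<le> 0" using False by linarith
      show "?f z \<le> ?f y"
        using mult_nonpos_nonneg[OF \<open>?D \<le> 0\<close> quot[OF yz]] diff[OF yz] by linarith
    qed
    thus ?thesis ..
  qed
qed

lemma diameter_mobius_image:
  assumes "a \<le> b" "r * a + s > 0" "r * b + s > 0"
  shows "diameter (mobius p q r s ` {a..b})
           = \<bar>p * s - q * r\<bar> * (b - a) / ((r * b + s) * (r * a + s))"
proof -
  have "r * y + s > 0" if "y \<in> {a..b}" for y
  proof (cases "r \<ge> 0")
    case True
    then have "r * a \<le> r * y" using that by (simp add: mult_left_mono)
    thus ?thesis using assms by linarith
  next
    case False
    then have "r * b \<le> r * y" using that by (simp add: mult_left_mono_neg)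
    thus ?thesis using assms by linarith
  qed
  hence "diameter (mobius p q r s ` {a..b}) = \<bar>mobius p q r s b - mobius p q r s a\<bar>"
    by (intro diameter_image_monotone_interval \<open>a \<le> b\<close> mobius_monotone_on)
  also have "\<dots> = \<bar>p * s - q * r\<bar> * (b - a) / ((r * b + s) * (r * a + s))"
    using mobius_diff[of r b s a p q] assms by (simp add: abs_mult abs_divide)
  finally show ?thesis .
qed

lemma mobius_diameter_estimate:
  fixes p q r s x e :: real
  assumes "r \<ge> 0" "s \<ge> 0" "r * x + s > 0" "0 < e" "e < x"
  shows "\<bar>diameter (mobius p q r s ` U e x) - e * (\<bar>p * s - q * r\<bar> / (r * x + s)^2)\<bar>
           \<le> \<bar>p * s - q * r\<bar> * r^2 / (2 * (r * x + s)^4) * e^3"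
proof -
  define K where "K y = r * y + s" for y
  define a b where "a = x - e/2" and "b = x + e/2"
  have Kx: "K x > 0" using assms unfolding K_def by simp
  have Ka: "K a \<ge> K x / 2"
  proof -
    have "r * x \<le> r * (2 * a)" using assms unfolding a_def by (intro mult_left_mono) auto
    thus ?thesis using assms unfolding K_def by simp
  qed
  have Kb: "K b \<ge> K x" using assms unfolding K_def b_def by (simp add: mult_left_mono)
  have prod: "K b * K a = (K x)^2 - (r * e / 2)^2"
    unfolding K_def a_def b_def by (simp add: algebra_simps power2_eq_square)
  have Kba: "K b * K a > 0" using Ka Kb Kx by simp
  have diam: "diameter (mobius p q r s ` U e x) = \<bar>p * s - q * r\<bar> * (e / (K b * K a))"
    using diameter_mobius_image[of a b r s p q] Ka Kb Kx assms(4)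
    unfolding U_def K_def a_def b_def by simp
  have "e / (K b * K a) - e / (K x)^2 = e * ((K x)^2 - K b * K a) / (K b * K a * (K x)^2)"
    using Kba Kx by (subst diff_frac_eq) (auto simp: right_diff_distrib mult.commute)
  also have "\<dots> = e * (r * e / 2)^2 / (K b * K a * (K x)^2)"
    by (simp add: prod)
  also have "\<dots> \<le> e * (r * e / 2)^2 / (K x * (K x / 2) * (K x)^2)"
    using Ka Kb Kx assms(4) by (intro divide_left_mono mult_right_mono mult_mono) auto
  also have "\<dots> = r^2 / (2 * (K x)^4) * e^3"
    using Kx by (simp add: field_simps power2_eq_square power3_eq_cube power4_eq_xxxx)
  finally have err: "e / (K b * K a) - e / (K x)^2 \<le> r^2 / (2 * (K x)^4) * e^3" .
  have "e / (K x)^2 \<le> e / (K b * K a)"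
  proof (rule divide_left_mono)
    show "K b * K a \<le> (K x)^2" using prod by simp
  qed (use Kba Kx assms(4) in auto)
  moreover have "diameter (mobius p q r s ` U e x) - e * (\<bar>p * s - q * r\<bar> / (K x)^2)
      = \<bar>p * s - q * r\<bar> * (e / (K b * K a) - e / (K x)^2)"
    by (simp add: diam right_diff_distrib)
  ultimately have "\<bar>diameter (mobius p q r s ` U e x) - e * (\<bar>p * s - q * r\<bar> / (K x)^2)\<bar>
      = \<bar>p * s - q * r\<bar> * (e / (K b * K a) - e / (K x)^2)"
    by (simp add: abs_mult)
  also have "\<dots> \<le> \<bar>p * s - q * r\<bar> * (r^2 / (2 * (K x)^4) * e^3)"
    using err by (rule mult_left_mono) simp
  finally show ?thesis by (simp add: K_def)
qed

lemma Phi_comp: "h \<in> Phi \<Longrightarrow> g \<in> Phi \<Longrightarrow> h \<circ> g \<in> Phi"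
  unfolding Phi_def by (auto simp flip: word_map_append)

lemma Phi_pos: "f \<in> Phi \<Longrightarrow> x > 0 \<Longrightarrow> f x > 0"
  unfolding Phi_def using word_map_pos by blast

lemma Phi_eq_mobius:
  assumes "f \<in> Phi"
  obtains p q r s where "\<And>x. x > 0 \<Longrightarrow> f x = mobius p q r s x"
    and "\<bar>p * s - q * r\<bar> = 1" "r \<ge> 0" "s \<ge> 0" "r + s > 0"
    and "\<And>x. x > 0 \<Longrightarrow> deriv f x = (p * s - q * r) / (r * x + s)^2"
proof -
  obtain w where f: "f = word_map w" using assms unfolding Phi_def by blast
  obtain p q r s where coeffs: "r \<ge> 0" "s \<ge> 0" "r + s > 0" "\<bar>p * s - q * r\<bar> = 1"
    and w: "\<forall>x>0. word_map w x = mobius p q r s x"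
    using word_map_eq_mobius[of w] by blast
  have "r * x + s \<noteq> 0" if "x > 0" for x
    using coeffs that affine_pos by force
  with coeffs w show ?thesis
    by (intro that[of p q r s]) (auto simp: f deriv_word_map)
qed

lemma Phi_deriv_nonzero: "f \<in> Phi \<Longrightarrow> x > 0 \<Longrightarrow> deriv f x \<noteq> 0"
  by (erule Phi_eq_mobius) (use affine_pos in force)

lemma Phi_diameter_cubic_error:
  assumes "f \<in> Phi" "x > 0"
  obtains C where "\<And>e. 0 < e \<Longrightarrow> e < x \<Longrightarrow>
    \<bar>diameter (f ` U e x) - e * \<bar>deriv f x\<bar>\<bar> \<le> C * e^3"
proof -
  obtain p q r s where f: "\<And>x. x > 0 \<Longrightarrow> f x = mobius p q r s x"
    and coeffs: "\<bar>p * s - q * r\<bar> = 1" "r \<ge> 0" "s \<ge> 0" "r + s > 0"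
    and f': "\<And>x. x > 0 \<Longrightarrow> deriv f x = (p * s - q * r) / (r * x + s)^2"
    using assms(1) by (rule Phi_eq_mobius) (rule that)
  have K: "r * x + s > 0"
    using coeffs assms(2) by (simp add: affine_pos)
  show ?thesis
  proof (rule that[of "\<bar>p * s - q * r\<bar> * r^2 / (2 * (r * x + s)^4)"])
    fix e :: real assume e: "0 < e" "e < x"
    have image: "f ` U e x = mobius p q r s ` U e x"
      using e by (intro image_cong refl f) (auto simp: U_def)
    have slope: "\<bar>deriv f x\<bar> = \<bar>p * s - q * r\<bar> / (r * x + s)^2"
      using f'[OF assms(2)] K by (simp add: abs_divide)
    show "\<bar>diameter (f ` U e x) - e * \<bar>deriv f x\<bar>\<bar>
        \<le> \<bar>p * s - q * r\<bar> * r^2 / (2 * (r * x + s)^4) * e^3"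
      unfolding image slope by (rule mobius_diameter_estimate[OF coeffs(2,3) K e])
  qed
qed

theorem lemma2p2:
  "\<forall>g\<in>Phi. \<exists>\<Delta> :: real \<Rightarrow> real.
      (\<forall>s\<in>{0<..1}. \<Delta> s > 0) \<and> (\<Delta> \<longlongrightarrow> 0) (at_right 0) \<and>
      (\<forall>h\<in>Phi. \<forall>\<^sub>F \<epsilon> in at_right 0.
         \<bar>diameter (h ` U \<epsilon> (g 1)) - \<epsilon> * \<bar>deriv h (g 1)\<bar>\<bar>
           < \<epsilon> * \<bar>deriv (h \<circ> g) 1\<bar> * \<Delta> \<epsilon>)"
proof (intro ballI exI[of _ "\<lambda>s. s"] conjI)
  show "((\<lambda>s. s) \<longlongrightarrow> 0) (at_right (0::real))"
    by (rule tendsto_ident_at)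
  fix g h assume g: "g \<in> Phi" and h: "h \<in> Phi"
  define c where "c = \<bar>deriv (h \<circ> g) 1\<bar>"
  have c: "c > 0" unfolding c_def using Phi_deriv_nonzero[OF Phi_comp[OF h g]] by simp
  have g1: "g 1 > 0" using Phi_pos[OF g] by simp
  obtain C where C: "\<And>e. 0 < e \<Longrightarrow> e < g 1 \<Longrightarrow>
      \<bar>diameter (h ` U e (g 1)) - e * \<bar>deriv h (g 1)\<bar>\<bar> \<le> C * e^3"
    using Phi_diameter_cubic_error[OF h g1] by blast
  have "((\<lambda>e. C * e) \<longlongrightarrow> 0) (at_right 0)"
    by (auto intro!: tendsto_eq_intros)
  hence "\<forall>\<^sub>F e in at_right 0. C * e < c" using c by (rule order_tendstoD)
  moreover have "\<forall>\<^sub>F e in at_right 0. e < g 1"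
    using tendsto_ident_at g1 by (rule order_tendstoD)
  ultimately show "\<forall>\<^sub>F e in at_right 0.
      \<bar>diameter (h ` U e (g 1)) - e * \<bar>deriv h (g 1)\<bar>\<bar> < e * c * e"
    using eventually_at_right_less[of 0]
  proof eventually_elim
    case (elim e)
    have "C * e^3 = e * (C * e) * e" by (simp add: power3_eq_cube)
    also have "\<dots> < e * c * e" using elim by simp
    finally show ?case using C[of e] elim by linarith
  qed
qed simp

end
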